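(* For every real $r>1$, the number $C_r$ of connected components of $\overline{\sigma_{-r}(\mathbb{N})}$ satisfies $C_r\ge 2^{\pi(r-1)}$, where $\pi(x)$ denotes the number of primes at most $x$.
   Context: For real $r>1$, $\sigma_{-r}(n)=\sum_{d\mid n}d^{-r}$ for $n\in\mathbb{N}$, and $\overline{\sigma_{-r}(\mathbb{N})}$ is the closure in $\mathbb{R}$ of its image. $C_r$ is the number of connected components of this closure. *)

theory Defs
  imports "HOL-Analysis.Analysis" "HOL-Computational_Algebra.Primes"
begin

definition sigma_neg :: "real \<Rightarrow> nat \<Rightarrow> real" where
  "sigma_neg r n = (\<Sum>d \<in> {d. d dvd n}. real d powr (- r))"

definition sigma_closure :: "real \<Rightarrow> real set" where
  "sigma_closure r = closure (sigma_neg r ` {1..})"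

definition prime_pi :: "real \<Rightarrow> nat" where
  "prime_pi x = card {p :: nat. prime p \<and> real p \<le> x}"

end

theory Submission
  imports Defs
begin

(* Let N = floor (r - 1) and label n by its set of divisors d <= N. If n and n' carry different
   labels and m is the least d <= N dividing exactly one of them, say n, then the divisors below m
   agree and sigma(n) - sigma(n') >= m^-r - sum_{d>m} d^-r. Comparing the tail with an integral,
   this is at least m^-r - (m+1)^-r - (m+1)^(1-r)/(r-1) > 0 because m <= r - 1. So the finitely many
   label classes of sigma(N) are uniformly separated, their closures are disjoint closed sets, and
   points with different labels lie in different components. The 2^pi(r-1) products of sets of
   primes p <= r - 1 all carry different labels. *)

(* The right-hand side is the integral of x powr (- r) over [a, a + 1]. *)
lemma succ_powr_neg_less_powr_diff:
  fixes a r :: real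
  assumes r: "r > 1" and a: "a > 0"
  shows "(a + 1) powr (- r) < (a powr (1 - r) - (a + 1) powr (1 - r)) / (r - 1)"
proof -
  have "\<And>x. a \<le> x \<Longrightarrow> x \<le> a + 1 \<Longrightarrow>
      ((\<lambda>x. x powr (1 - r)) has_real_derivative (1 - r) * x powr (1 - r - 1)) (at x)"
    using a by (intro has_real_derivative_powr) auto
  then obtain \<xi> where \<xi>: "a < \<xi>" "\<xi> < a + 1"
    and mvt: "(a + 1) powr (1 - r) - a powr (1 - r) = (a + 1 - a) * ((1 - r) * \<xi> powr (1 - r - 1))"
    using MVT2[of a "a + 1"] by fastforce
  have diff: "a powr (1 - r) - (a + 1) powr (1 - r) = (r - 1) * \<xi> powr (- r)"
    using mvt by (simp add: algebra_simps)
  have "(a + 1) powr (- r) < \<xi> powr (- r)"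
    using \<xi> a r by (intro powr_less_mono2_neg) auto
  with r have "(r - 1) * (a + 1) powr (- r) < (r - 1) * \<xi> powr (- r)"
    by simp
  with diff r show ?thesis
    by (simp add: less_divide_eq mult.commute)
qed

lemma sum_powr_neg_atLeastAtMost_le:
  fixes r :: real
  assumes r: "r > 1" and k: "k > 0" and M: "k \<le> M"
  shows "(\<Sum>j = k + 1..M. real j powr (- r))
    \<le> (real k powr (1 - r) - real M powr (1 - r)) / (r - 1)"
  using M
proof (induction M rule: dec_induct)
  case base
  then show ?case by simp
next
  case (step M)
  have "real (Suc M) powr (- r) < (real M powr (1 - r) - real (Suc M) powr (1 - r)) / (r - 1)"
    using succ_powr_neg_less_powr_diff[OF r, of "real M"] step k by (simp add: add.commute)
  with step show ?case
    by (simp add: diff_divide_distrib)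
qed

lemma sum_powr_neg_tail_le:
  fixes r :: real
  assumes r: "r > 1" and k: "k > 0" and F: "finite F" "F \<subseteq> {k<..}"
  shows "(\<Sum>j\<in>F. real j powr (- r)) \<le> real k powr (1 - r) / (r - 1)"
proof -
  define M where "M = Max (insert k F)"
  have "F \<subseteq> {k + 1..M}" "k \<le> M"
    using F by (auto simp: M_def Suc_le_eq)
  then have "(\<Sum>j\<in>F. real j powr (- r)) \<le> (\<Sum>j = k + 1..M. real j powr (- r))"
    by (intro sum_mono2) auto
  also have "\<dots> \<le> (real k powr (1 - r) - real M powr (1 - r)) / (r - 1)"
    using sum_powr_neg_atLeastAtMost_le[OF r k \<open>k \<le> M\<close>] .
  also have "\<dots> \<le> real k powr (1 - r) / (r - 1)"
    using r by (simp add: divide_right_mono)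
  finally show ?thesis .
qed

definition divisors_upto :: "real \<Rightarrow> nat \<Rightarrow> nat set" where
  "divisors_upto x n = {d. d dvd n \<and> 0 < d \<and> real d \<le> x}"

definition sigma_gap :: "real \<Rightarrow> nat \<Rightarrow> real" where
  "sigma_gap r m =
     real m powr (- r) - real (m + 1) powr (- r) - real (m + 1) powr (1 - r) / (r - 1)"

lemma sigma_gap_pos:
  fixes r :: real
  assumes r: "r > 1" and m: "0 < m" "real m \<le> r - 1"
  shows "sigma_gap r m > 0"
proof -
  have "real m powr (1 - r) / (r - 1) = real m powr (- r) * (real m / (r - 1))"
    using m by (simp add: powr_diff powr_minus_divide field_simps)
  also have "\<dots> \<le> real m powr (- r)"
    using m r by (intro mult_left_le) auto
  finally show ?thesis
    using succ_powr_neg_less_powr_diff[OF r, of "real m"] m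
    by (simp add: sigma_gap_def diff_divide_distrib add.commute)
qed

lemma sigma_neg_diff_ge_gap:
  fixes r :: real
  assumes r: "r > 1" and n: "n > 0" "n' > 0" and m: "m dvd n" "\<not> m dvd n'"
    and below: "\<And>j. j < m \<Longrightarrow> j dvd n \<longleftrightarrow> j dvd n'"
  shows "sigma_gap r m \<le> sigma_neg r n - sigma_neg r n'"
proof -
  define L where "L = {d. d dvd n' \<and> d < m}"
  define T where "T = {d. d dvd n' \<and> m < d}"
  have fin: "finite {d. d dvd n}" "finite {d. d dvd n'}"
    using n by (simp_all add: finite_divisors_nat)
  have "real m powr (- r) + (\<Sum>d\<in>L. real d powr (- r)) = (\<Sum>d\<in>insert m L. real d powr (- r))"
    using fin(2) by (simp add: L_def)
  also have "\<dots> \<le> sigma_neg r n"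
    unfolding sigma_neg_def using fin(1) m below by (intro sum_mono2) (auto simp: L_def)
  finally have lower: "real m powr (- r) + (\<Sum>d\<in>L. real d powr (- r)) \<le> sigma_neg r n" .
  have "d < m \<or> m < d" if "d dvd n'" for d
    using m(2) that by (cases "d = m") auto
  then have "{d. d dvd n'} = L \<union> T"
    by (auto simp: L_def T_def)
  moreover have "finite L" and fT: "finite T"
    using fin(2) by (simp_all add: L_def T_def)
  moreover have "L \<inter> T = {}"
    by (auto simp: L_def T_def)
  ultimately have split:
    "sigma_neg r n' = (\<Sum>d\<in>L. real d powr (- r)) + (\<Sum>d\<in>T. real d powr (- r))"
    unfolding sigma_neg_def by (simp add: sum.union_disjoint)
  have "(\<Sum>d\<in>T. real d powr (- r)) \<le> (\<Sum>d\<in>insert (m + 1) T. real d powr (- r))"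
    using fT by (intro sum_mono2) auto
  also have "\<dots> = real (m + 1) powr (- r) + (\<Sum>d\<in>T - {m + 1}. real d powr (- r))"
    using fT by (simp add: sum.insert_remove)
  also have "(\<Sum>d\<in>T - {m + 1}. real d powr (- r)) \<le> real (m + 1) powr (1 - r) / (r - 1)"
    using fT by (intro sum_powr_neg_tail_le[OF r]) (auto simp: T_def)
  finally have upper: "(\<Sum>d\<in>T. real d powr (- r))
      \<le> real (m + 1) powr (- r) + real (m + 1) powr (1 - r) / (r - 1)"
    by simp
  show ?thesis
    using lower split upper unfolding sigma_gap_def by linarith
qed

lemma sigma_neg_separated:
  fixes r :: real
  assumes r: "r > 1"
  obtains \<delta> where "\<delta> > 0"
    and "\<And>n n'. n \<in> {1..} \<Longrightarrow> n' \<in> {1..}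
           \<Longrightarrow> divisors_upto (r - 1) n \<noteq> divisors_upto (r - 1) n'
           \<Longrightarrow> \<delta> \<le> dist (sigma_neg r n) (sigma_neg r n')"
proof
  define K where "K = {m. 0 < m \<and> real m \<le> r - 1}"
  have fK: "finite K"
    by (rule finite_subset[of _ "{..nat \<lfloor>r\<rfloor>}"]) (auto simp: K_def intro!: le_nat_floor)
  define \<delta> where "\<delta> = Min (insert 1 (sigma_gap r ` K))"
  show "\<delta> > 0"
    using fK sigma_gap_pos[OF r] by (auto simp: \<delta>_def K_def Min_gr_iff)
  fix n n' :: nat
  assume "n \<in> {1..}" "n' \<in> {1..}" and ne: "divisors_upto (r - 1) n \<noteq> divisors_upto (r - 1) n'"
  then have n: "n > 0" "n' > 0"
    by auto
  define S where "S = (divisors_upto (r - 1) n - divisors_upto (r - 1) n')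
    \<union> (divisors_upto (r - 1) n' - divisors_upto (r - 1) n)"
  have "S \<subseteq> K"
    by (auto simp: S_def K_def divisors_upto_def)
  then have fS: "finite S"
    using fK by (rule finite_subset)
  have "S \<noteq> {}"
    using ne by (auto simp: S_def)
  define m where "m = Min S"
  have "m \<in> S"
    using fS \<open>S \<noteq> {}\<close> by (simp add: m_def)
  then have m: "0 < m" "real m \<le> r - 1"
    using \<open>S \<subseteq> K\<close> by (auto simp: K_def)
  have below: "j dvd n \<longleftrightarrow> j dvd n'" if "j < m" for j
  proof (cases "j = 0")
    case False
    have "j \<notin> S"
      using Min_le[OF fS, of j] that by (auto simp: m_def)
    moreover have "real j \<le> r - 1"
      using that m by linarith
    ultimately show ?thesis
      using False by (auto simp: S_def divisors_upto_def)
  qed (use n in simp)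
  have "sigma_gap r m \<le> \<bar>sigma_neg r n - sigma_neg r n'\<bar>"
  proof (cases "m dvd n")
    case True
    then have "\<not> m dvd n'"
      using \<open>m \<in> S\<close> by (auto simp: S_def divisors_upto_def)
    with sigma_neg_diff_ge_gap[OF r n True _ below] show ?thesis
      by linarith
  next
    case False
    then have "m dvd n'"
      using \<open>m \<in> S\<close> by (auto simp: S_def divisors_upto_def)
    with sigma_neg_diff_ge_gap[OF r n(2,1) _ False] below show ?thesis
      by fastforce
  qed
  moreover have "\<delta> \<le> sigma_gap r m"
    using fK m by (simp add: \<delta>_def K_def)
  ultimately show "\<delta> \<le> dist (sigma_neg r n) (sigma_neg r n')"
    by (simp add: dist_real_def)
qed

lemma not_connected_component_closure_image:
  fixes f :: "'a \<Rightarrow> 'b::metric_space" and label :: "'a \<Rightarrow> 'c"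
  assumes \<delta>: "\<delta> > 0"
    and sep: "\<And>x y. x \<in> A \<Longrightarrow> y \<in> A \<Longrightarrow> label x \<noteq> label y \<Longrightarrow> \<delta> \<le> dist (f x) (f y)"
    and xy: "x \<in> A" "y \<in> A" "label x \<noteq> label y"
  shows "\<not> connected_component (closure (f ` A)) (f x) (f y)"
proof
  define B where "B = closure (f ` {z \<in> A. label z = label x})"
  define C where "C = closure (f ` {z \<in> A. label z \<noteq> label x})"
  have "f ` A = f ` {z \<in> A. label z = label x} \<union> f ` {z \<in> A. label z \<noteq> label x}"
    by blast
  then have cover: "closure (f ` A) = B \<union> C"
    by (simp add: B_def C_def closure_Un)
  have disjoint: "B \<inter> C = {}"
  proof (rule ccontr)
    assume "B \<inter> C \<noteq> {}"
    then obtain z where "z \<in> B" "z \<in> C"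
      by blast
    then have "\<exists>b\<in>f ` {z \<in> A. label z = label x}. dist b z < \<delta> / 2"
      and "\<exists>c\<in>f ` {z \<in> A. label z \<noteq> label x}. dist c z < \<delta> / 2"
      using half_gt_zero[OF \<delta>] unfolding B_def C_def closure_approachable by blast+
    then obtain u v where "u \<in> A" "v \<in> A" "label u \<noteq> label v"
      and "dist (f u) z < \<delta> / 2" "dist (f v) z < \<delta> / 2"
      by auto
    then have "dist (f u) (f v) < \<delta>" and "\<delta> \<le> dist (f u) (f v)"
      using sep dist_triangle_half_l by blast+
    then show False
      by simp
  qed
  assume "connected_component (closure (f ` A)) (f x) (f y)"
  then obtain T where T: "connected T" "T \<subseteq> B \<union> C" "f x \<in> T" "f y \<in> T"
    unfolding connected_component_def cover by blast
  have "B \<inter> T = {} \<or> C \<inter> T = {}"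
    using T disjoint by (intro connected_closedD) (auto simp: B_def C_def)
  moreover have "f x \<in> B" "f y \<in> C"
    using xy by (auto simp: B_def C_def intro!: subsetD[OF closure_subset])
  ultimately show False
    using T by blast
qed

lemma card_le_card_components:
  assumes fin: "finite (components S)" and p: "p ` I \<subseteq> S"
    and apart: "\<And>i j. i \<in> I \<Longrightarrow> j \<in> I \<Longrightarrow> i \<noteq> j \<Longrightarrow> \<not> connected_component S (p i) (p j)"
  shows "card I \<le> card (components S)"
proof -
  have "inj_on (\<lambda>i. connected_component_set S (p i)) I"
  proof (rule inj_onI)
    fix i j
    assume "i \<in> I" "j \<in> I" "connected_component_set S (p i) = connected_component_set S (p j)"
    then have "connected_component S (p i) (p j)"
      using p by (simp add: connected_component_eq_eq image_subset_iff)
    with \<open>i \<in> I\<close> \<open>j \<in> I\<close> apart show "i = j"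
      by blast
  qed
  moreover have "(\<lambda>i. connected_component_set S (p i)) ` I \<subseteq> components S"
    using p by (auto intro: componentsI)
  ultimately show ?thesis
    using fin by (rule card_inj_on_le)
qed

lemma card_le_card_components_closure_image:
  fixes f :: "'a \<Rightarrow> 'b::metric_space" and label :: "'a \<Rightarrow> 'c"
  assumes fin: "finite (components (closure (f ` A)))" and \<delta>: "\<delta> > 0"
    and sep: "\<And>x y. x \<in> A \<Longrightarrow> y \<in> A \<Longrightarrow> label x \<noteq> label y \<Longrightarrow> \<delta> \<le> dist (f x) (f y)"
    and g: "g ` I \<subseteq> A" "inj_on (label \<circ> g) I"
  shows "card I \<le> card (components (closure (f ` A)))"
proof (rule card_le_card_components[OF fin])
  show "(f \<circ> g) ` I \<subseteq> closure (f ` A)"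
    using g(1) closure_subset by fastforce
  show "\<not> connected_component (closure (f ` A)) ((f \<circ> g) i) ((f \<circ> g) j)"
    if "i \<in> I" "j \<in> I" "i \<noteq> j" for i j
  proof -
    have "g i \<in> A" "g j \<in> A" "label (g i) \<noteq> label (g j)"
      using g that unfolding inj_on_def by auto
    with sep have "\<not> connected_component (closure (f ` A)) (f (g i)) (f (g j))"
      by (rule not_connected_component_closure_image[OF \<delta>])
    then show ?thesis
      by simp
  qed
qed

lemma prime_dvd_prod_primes_iff:
  fixes p :: "'a::factorial_semiring"
  assumes T: "finite T" "\<forall>q\<in>T. prime q" and p: "prime p"
  shows "p dvd \<Prod>T \<longleftrightarrow> p \<in> T"
proof
  assume "p dvd \<Prod>T"
  then obtain q where "q \<in> T" "p dvd q"
    using T p by (auto simp: prime_dvd_prod_iff)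
  with T p show "p \<in> T"
    using primes_dvd_imp_eq[of p q] by auto
next
  assume "p \<in> T"
  with T show "p dvd \<Prod>T"
    by (auto intro: dvd_prodI)
qed

lemma divisors_upto_prod_primes:
  assumes "finite T" "\<forall>p\<in>T. prime p \<and> real p \<le> x"
  shows "{p \<in> divisors_upto x (\<Prod>T). prime p} = T"
  using assms by (auto simp: divisors_upto_def prime_dvd_prod_primes_iff prime_gt_0_nat)

theorem mainTheorem3:
  fixes r :: real
  assumes "r > 1"
  shows "infinite (components (sigma_closure r))
         \<or> 2 ^ prime_pi (r - 1) \<le> card (components (sigma_closure r))"
  unfolding disj_not1
proof
  assume fin: "finite (components (sigma_closure r))"
  define P where "P = {p :: nat. prime p \<and> real p \<le> r - 1}"
  have "finite P"
    by (rule finite_subset[of _ "{..nat \<lfloor>r\<rfloor>}"]) (auto simp: P_def intro!: le_nat_floor)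
  obtain \<delta> where "\<delta> > 0" and sep: "\<And>n n'. n \<in> {1..} \<Longrightarrow> n' \<in> {1..}
      \<Longrightarrow> divisors_upto (r - 1) n \<noteq> divisors_upto (r - 1) n'
      \<Longrightarrow> \<delta> \<le> dist (sigma_neg r n) (sigma_neg r n')"
    using sigma_neg_separated[OF assms] by blast
  have "\<forall>p\<in>P. p > 0"
    by (simp add: P_def prime_gt_0_nat)
  then have "Prod ` Pow P \<subseteq> {1..}"
    by (auto simp: Suc_le_eq subset_iff intro!: prod_pos)
  moreover have "inj_on (divisors_upto (r - 1) \<circ> Prod) (Pow P)"
  proof (rule inj_on_inverseI)
    show "{p \<in> (divisors_upto (r - 1) \<circ> Prod) T. prime p} = T" if "T \<in> Pow P" for T
      using that \<open>finite P\<close> unfolding comp_apply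
      by (intro divisors_upto_prod_primes) (auto simp: P_def intro: finite_subset)
  qed
  ultimately have "card (Pow P) \<le> card (components (sigma_closure r))"
    using card_le_card_components_closure_image[OF fin[unfolded sigma_closure_def] \<open>\<delta> > 0\<close> sep]
    by (simp add: sigma_closure_def)
  then show "2 ^ prime_pi (r - 1) \<le> card (components (sigma_closure r))"
    using \<open>finite P\<close> by (simp add: prime_pi_def P_def card_Pow)
qed

end
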